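(* Let $\widehat{\mathcal M}=(E_{2n}\cup\{q\},\widehat{\mathcal C})$ be an oriented matroid. Suppose there exist two distinct circuits $X,Y\in\widehat{\mathcal C}$ whose supports are complementary, with $X_q=Y_q=+$, such that for every $i\in[n]$ either $X_{s_i}Y_{t_i}=X_{t_i}Y_{s_i}=0$, or ($X_{s_i}=Y_{t_i}$ and $X_{t_i}=Y_{s_i}$). Then $\widehat{\mathcal M}$ is not a P-matroid extension.
   Context: An oriented matroid $(E,\mathcal C)$ is given by its circuits, signed sets $X\in\{-,0,+\}^E$ satisfying: (C0) the zero vector is not a circuit; (C1) $X\in\mathcal C\iff -X\in\mathcal C$; (C2) if $\underline X\subseteq\underline Y$ then $X=\pm Y$; (C3) for $X\neq -Y$ and $e$ with $X_e=+$, $Y_e=-$, there is a circuit $Z$ with $Z^+\subseteq(X^+\cup Y^+)\setminus\{e\}$ and $Z^-\subseteq(X^-\cup Y^-)\setminus\{e\}$. Here $\underline X=\{e:X_e\neq0\}$, $X^\pm=\{e:X_e=\pm\}$. A basis is an inclusion-maximal subset of $E$ containing no circuit support. $S=\{s_1,\dots,s_n\}$, $T=\{t_1,\dots,t_n\}$, $E_{2n}=S\cup T$, $q\notin E_{2n}$; a set is complementary if it contains no pair $\{s_i,t_i\}$. A circuit $X$ is sign-reversing if $X_{s_i}=-X_{t_i}$ for every $i$ with $\{s_i,t_i\}\subseteq\underline X$. A P-matroid is an oriented matroid on $E_{2n}$ in which $S$ is a basis and no circuit is sign-reversing. A P-matroid extension is an oriented matroid on $E_{2n}\cup\{q\}$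 whose circuits $X$ with $X_q=0$, restricted to $E_{2n}$, are exactly the circuits of a P-matroid. (In a P-matroid extension every complementary set of size $n$ is a basis.) *)

theory Defs
  imports Main
begin

datatype sign = Neg | Zero | Pos

fun sign_opp :: "sign \<Rightarrow> sign" where
  "sign_opp Neg = Pos" | "sign_opp Zero = Zero" | "sign_opp Pos = Neg"

fun sign_mult :: "sign \<Rightarrow> sign \<Rightarrow> sign" where
  "sign_mult Zero _ = Zero"
| "sign_mult _ Zero = Zero"
| "sign_mult Pos Pos = Pos"
| "sign_mult Neg Neg = Pos"
| "sign_mult Pos Neg = Neg"
| "sign_mult Neg Pos = Neg"

type_synonym 'a signed = "'a \<Rightarrow> sign"

definition supp :: "'a signed \<Rightarrow> 'a set" where
  "supp X = {e. X e \<noteq> Zero}"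

definition posp :: "'a signed \<Rightarrow> 'a set" where
  "posp X = {e. X e = Pos}"

definition negp :: "'a signed \<Rightarrow> 'a set" where
  "negp X = {e. X e = Neg}"

definition sneg :: "'a signed \<Rightarrow> 'a signed" where
  "sneg X = (\<lambda>e. sign_opp (X e))"

definition oriented_matroid :: "'a set \<Rightarrow> 'a signed set \<Rightarrow> bool" where
  "oriented_matroid E \<C> \<longleftrightarrow>
     finite E \<and>
     (\<forall>X\<in>\<C>. supp X \<subseteq> E) \<and>
     (\<lambda>_. Zero) \<notin> \<C> \<and>
     (\<forall>X. X \<in> \<C> \<longleftrightarrow> sneg X \<in> \<C>) \<and>
     (\<forall>X\<in>\<C>. \<forall>Y\<in>\<C>. supp X \<subseteq> supp Y \<longrightarrow> X = Y \<or> X = sneg Y) \<and>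
     (\<forall>X\<in>\<C>. \<forall>Y\<in>\<C>. \<forall>e. X \<noteq> sneg Y \<and> X e = Pos \<and> Y e = Neg \<longrightarrow>
        (\<exists>Z\<in>\<C>. posp Z \<subseteq> (posp X \<union> posp Y) - {e} \<and>
                 negp Z \<subseteq> (negp X \<union> negp Y) - {e}))"

definition om_independent :: "'a set \<Rightarrow> 'a signed set \<Rightarrow> 'a set \<Rightarrow> bool" where
  "om_independent E \<C> B \<longleftrightarrow> B \<subseteq> E \<and> \<not> (\<exists>X\<in>\<C>. supp X \<subseteq> B)"

definition om_basis :: "'a set \<Rightarrow> 'a signed set \<Rightarrow> 'a set \<Rightarrow> bool" where
  "om_basis E \<C> B \<longleftrightarrow> om_independent E \<C> B \<and>
     (\<forall>B'. om_independent E \<C> B' \<and> B \<subseteq> B' \<longrightarrow> B' = B)"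

datatype elem = s nat | t nat | q

definition Sset :: "nat \<Rightarrow> elem set" where
  "Sset n = s ` {1..n}"

definition Tset :: "nat \<Rightarrow> elem set" where
  "Tset n = t ` {1..n}"

definition E2n :: "nat \<Rightarrow> elem set" where
  "E2n n = Sset n \<union> Tset n"

definition complementary :: "nat \<Rightarrow> elem set \<Rightarrow> bool" where
  "complementary n A \<longleftrightarrow> (\<forall>i\<in>{1..n}. \<not> (s i \<in> A \<and> t i \<in> A))"

definition sign_reversing :: "nat \<Rightarrow> elem signed \<Rightarrow> bool" where
  "sign_reversing n X \<longleftrightarrow>
     (\<forall>i\<in>{1..n}. s i \<in> supp X \<and> t i \<in> supp X \<longrightarrow> X (s i) = sign_opp (X (t i)))"

definition P_matroid :: "nat \<Rightarrow> elem signed set \<Rightarrow> bool" where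
  "P_matroid n \<C> \<longleftrightarrow>
     oriented_matroid (E2n n) \<C> \<and> om_basis (E2n n) \<C> (Sset n) \<and>
     (\<forall>X\<in>\<C>. \<not> sign_reversing n X)"

definition restrict_E2n :: "elem signed \<Rightarrow> elem signed" where
  "restrict_E2n X = X(q := Zero)"

definition P_matroid_extension :: "nat \<Rightarrow> elem signed set \<Rightarrow> bool" where
  "P_matroid_extension n \<C> \<longleftrightarrow>
     oriented_matroid (E2n n \<union> {q}) \<C> \<and>
     P_matroid n (restrict_E2n ` {X\<in>\<C>. X q = Zero})"

end

theory Submission
  imports Defs
begin

text \<open>Eliminating q between X and -Y gives a circuit Z of the underlying P-matroid whose
  signs are taken from X or from -Y. On a pair s_i, t_i on which Z is nonzero, complementarity
  forces one entry to come from X and the other from -Y, and the coupling hypothesis then makes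
  these entries opposite. So Z is sign-reversing, which a P-matroid forbids.\<close>

lemma sign_opp_sign_opp [simp]: "sign_opp (sign_opp a) = a"
  by (cases a) simp_all

lemma sneg_sneg [simp]: "sneg (sneg X) = X"
  by (simp add: sneg_def)

lemma posp_sneg [simp]: "posp (sneg X) = negp X"
  unfolding posp_def negp_def sneg_def by (metis sign_opp.simps(1,3) sign_opp_sign_opp)

lemma negp_sneg [simp]: "negp (sneg X) = posp X"
  using posp_sneg[of "sneg X"] by simp

lemma oriented_matroid_sneg_closed:
  assumes "oriented_matroid E \<C>" and "X \<in> \<C>"
  shows "sneg X \<in> \<C>"
proof -
  have "\<forall>X. X \<in> \<C> \<longleftrightarrow> sneg X \<in> \<C>"
    using assms(1) unfolding oriented_matroid_def by (elim conjE)
  with assms(2) show ?thesis by blast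
qed

lemma oriented_matroid_elimination:
  assumes "oriented_matroid E \<C>" and "X \<in> \<C>" and "Y \<in> \<C>" and "X \<noteq> sneg Y"
    and "X e = Pos" and "Y e = Neg"
  obtains Z where "Z \<in> \<C>" and "Z e = Zero"
    and "posp Z \<subseteq> posp X \<union> posp Y" and "negp Z \<subseteq> negp X \<union> negp Y"
proof -
  have "\<forall>X\<in>\<C>. \<forall>Y\<in>\<C>. \<forall>e. X \<noteq> sneg Y \<and> X e = Pos \<and> Y e = Neg \<longrightarrow>
      (\<exists>Z\<in>\<C>. posp Z \<subseteq> (posp X \<union> posp Y) - {e} \<and> negp Z \<subseteq> (negp X \<union> negp Y) - {e})"
    using assms(1) unfolding oriented_matroid_def by (elim conjE)
  then obtain Z where Z: "Z \<in> \<C>" "posp Z \<subseteq> (posp X \<union> posp Y) - {e}"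
      "negp Z \<subseteq> (negp X \<union> negp Y) - {e}"
    using assms(2-6) by blast
  have "Z e = Zero"
    using Z(2,3) by (cases "Z e") (auto simp: posp_def negp_def)
  with Z that show ?thesis by blast
qed

lemma P_matroid_extension_not_sign_reversing:
  assumes "P_matroid_extension n \<C>" and "Z \<in> \<C>" and "Z q = Zero"
  shows "\<not> sign_reversing n Z"
proof -
  have "\<forall>X\<in>restrict_E2n ` {X\<in>\<C>. X q = Zero}. \<not> sign_reversing n X"
    using assms(1) unfolding P_matroid_extension_def P_matroid_def by (elim conjE)
  moreover have "restrict_E2n Z = Z"
    using assms(3) unfolding restrict_E2n_def by auto
  ultimately show ?thesis
    using assms(2,3) by (metis (mono_tags, lifting) image_eqI mem_Collect_eq)
qed

lemma conformal_pair_opposite: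
  fixes za zb xa xb ya yb :: sign
  assumes "za \<noteq> Zero" and "zb \<noteq> Zero"
    and "xa = Zero \<or> xb = Zero" and "ya = Zero \<or> yb = Zero"
    and "(sign_mult xa yb = Zero \<and> sign_mult xb ya = Zero) \<or> (xa = yb \<and> xb = ya)"
    and "za = Pos \<Longrightarrow> xa = Pos \<or> ya = Neg" and "zb = Pos \<Longrightarrow> xb = Pos \<or> yb = Neg"
    and "za = Neg \<Longrightarrow> xa = Neg \<or> ya = Pos" and "zb = Neg \<Longrightarrow> xb = Neg \<or> yb = Pos"
  shows "za = sign_opp zb"
  using assms by (cases za; cases zb; simp; cases xa; simp; cases xb; simp; cases ya; simp; cases yb; simp)

lemma sign_reversing_if_conformal_to_difference:
  assumes Zp: "posp Z \<subseteq> posp X \<union> negp Y" and Zn: "negp Z \<subseteq> negp X \<union> posp Y"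
    and compX: "complementary n (supp X)" and compY: "complementary n (supp Y)"
    and cond: "\<forall>i\<in>{1..n}.
       (sign_mult (X (s i)) (Y (t i)) = Zero \<and> sign_mult (X (t i)) (Y (s i)) = Zero)
       \<or> (X (s i) = Y (t i) \<and> X (t i) = Y (s i))"
  shows "sign_reversing n Z"
  unfolding sign_reversing_def
proof (intro ballI impI)
  fix i assume i: "i \<in> {1..n}" and st: "s i \<in> supp Z \<and> t i \<in> supp Z"
  have pos: "Z e = Pos \<Longrightarrow> X e = Pos \<or> Y e = Neg" for e
    using Zp by (auto simp: posp_def negp_def)
  have neg: "Z e = Neg \<Longrightarrow> X e = Neg \<or> Y e = Pos" for e
    using Zn by (auto simp: posp_def negp_def)
  have "Z (s i) \<noteq> Zero" and "Z (t i) \<noteq> Zero"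
    using st by (simp_all add: supp_def)
  moreover have "X (s i) = Zero \<or> X (t i) = Zero" and "Y (s i) = Zero \<or> Y (t i) = Zero"
    using compX compY i unfolding complementary_def supp_def by auto
  moreover have "(sign_mult (X (s i)) (Y (t i)) = Zero \<and> sign_mult (X (t i)) (Y (s i)) = Zero)
      \<or> (X (s i) = Y (t i) \<and> X (t i) = Y (s i))"
    using cond i by blast
  ultimately show "Z (s i) = sign_opp (Z (t i))"
    by (rule conformal_pair_opposite) (fact pos neg)+
qed

theorem mainTheorem10:
  fixes n :: nat and \<C> :: "elem signed set" and X Y :: "elem signed"
  assumes om: "oriented_matroid (E2n n \<union> {q}) \<C>"
    and XC: "X \<in> \<C>" and YC: "Y \<in> \<C>" and XY: "X \<noteq> Y"
    and compX: "complementary n (supp X)" and compY: "complementary n (supp Y)"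
    and Xq: "X q = Pos" and Yq: "Y q = Pos"
    and cond: "\<forall>i\<in>{1..n}.
       (sign_mult (X (s i)) (Y (t i)) = Zero \<and> sign_mult (X (t i)) (Y (s i)) = Zero)
       \<or> (X (s i) = Y (t i) \<and> X (t i) = Y (s i))"
  shows "\<not> P_matroid_extension n \<C>"
proof
  assume PE: "P_matroid_extension n \<C>"
  have "sneg Y \<in> \<C>" and "X \<noteq> sneg (sneg Y)" and "sneg Y q = Neg"
    using oriented_matroid_sneg_closed[OF om YC] XY Yq by (simp_all add: sneg_def)
  then obtain Z where Z: "Z \<in> \<C>" "Z q = Zero"
    and conformal: "posp Z \<subseteq> posp X \<union> negp Y" "negp Z \<subseteq> negp X \<union> posp Y"
    using oriented_matroid_elimination[OF om XC, of "sneg Y" q] Xq by auto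
  have "sign_reversing n Z"
    using sign_reversing_if_conformal_to_difference[OF conformal compX compY cond] .
  with P_matroid_extension_not_sign_reversing[OF PE Z] show False by blast
qed

end
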